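(* Let $3\le m\le n$ and $r=m-1$. Then $\mathrm{Hrk}^\circ_{m-1}(m,n)=\mathrm{Hrk}^{\max}_{m-1}(m,n)=2$.
   Context: Work over $\mathbb{C}$. $A\star B$ denotes the entrywise (Hadamard) product of matrices, and for projective varieties $X,Y\subset\mathbb{P}^N$, $X\star Y$ is the Zariski closure of the set of entrywise products $p\star q$ ($p\in X,q\in Y$, $p\star q$ not the zero vector); $X^{\star1}=X$, $X^{\star s}=X\star X^{\star(s-1)}$. $X_r\subset\mathbb{P}(\mathrm{Mat}_{m,n})$ is the variety of $m\times n$ matrices of rank at most $r$. For a matrix $M$, $\mathrm{Hrk}_r(M)=\min\{s\mid M=A_1\star\cdots\star A_s,\ \mathrm{rk}(A_i)\le r\}$. $\mathrm{Hrk}_r^\circ(m,n)=\min\{s\mid X_r^{\star s}=\mathbb{P}(\mathrm{Mat}_{m,n})\}$ and $\mathrm{Hrk}_r^{\max}(m,n)=\max\{\mathrm{Hrk}_r(M)\mid M\in\mathrm{Mat}_{m,n}\}$. *)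

theory Defs
  imports "HOL-Analysis.Analysis"
begin

text \<open>Matrices of size m x n over the complex numbers are modelled as
  complex^'n^'m, with m = CARD('m), n = CARD('n).  Projective varieties in
  P(Mat_{m,n}) are represented by their affine cones in Mat_{m,n}.\<close>

definition hadamard :: "complex^'n^'m \<Rightarrow> complex^'n^'m \<Rightarrow> complex^'n^'m" (infixl "\<star>" 70)
  where "A \<star> B = (\<chi> i j. A $ i $ j * B $ i $ j)"

inductive_set polyfun :: "(complex^'n^'m \<Rightarrow> complex) set" where
  const: "(\<lambda>_. c) \<in> polyfun"
| coord: "(\<lambda>A. A $ i $ j) \<in> polyfun"
| add: "f \<in> polyfun \<Longrightarrow> g \<in> polyfun \<Longrightarrow> (\<lambda>A. f A + g A) \<in> polyfun"
| mult: "f \<in> polyfun \<Longrightarrow> g \<in> polyfun \<Longrightarrow> (\<lambda>A. f A * g A) \<in> polyfun"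

definition zariski_closure :: "(complex^'n^'m) set \<Rightarrow> (complex^'n^'m) set" where
  "zariski_closure S = {A. \<forall>f\<in>polyfun. (\<forall>B\<in>S. f B = 0) \<longrightarrow> f A = 0}"

definition hstar :: "(complex^'n^'m) set \<Rightarrow> (complex^'n^'m) set \<Rightarrow> (complex^'n^'m) set" where
  "hstar X Y = zariski_closure {A \<star> B | A B. A \<in> X \<and> B \<in> Y}"

definition Xr :: "nat \<Rightarrow> (complex^'n^'m) set" where
  "Xr r = {A. rank A \<le> r}"

fun hpow :: "nat \<Rightarrow> nat \<Rightarrow> (complex^'n^'m) set" where
  "hpow r 0 = Xr r"
| "hpow r (Suc 0) = Xr r"
| "hpow r (Suc (Suc s)) = hstar (Xr r) (hpow r (Suc s))"

definition Hrk :: "nat \<Rightarrow> complex^'n^'m \<Rightarrow> nat" where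
  "Hrk r M = (LEAST s. \<exists>As. As \<noteq> [] \<and> length As = s \<and> (\<forall>A\<in>set As. rank A \<le> r)
                  \<and> M = foldr (\<star>) (butlast As) (last As))"

definition Hrk_generic :: "nat \<Rightarrow> 'n::finite itself \<Rightarrow> 'm::finite itself \<Rightarrow> nat" where
  "Hrk_generic r _ _ = (LEAST s. s \<ge> 1 \<and> hpow r s = (UNIV :: (complex^'n^'m) set))"

definition Hrk_max :: "nat \<Rightarrow> 'n::finite itself \<Rightarrow> 'm::finite itself \<Rightarrow> nat" where
  "Hrk_max r _ _ = Max (range (Hrk r :: complex^'n^'m \<Rightarrow> nat))"

end

theory Submission imports Defs begin

text \<open>Pick three distinct rows \<open>i\<^sub>1, i\<^sub>2, i\<^sub>3\<close>. Entrywise, a column triple \<open>(x, y, z)\<close> can always be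
  written as \<open>(a\<^sub>1b\<^sub>1, a\<^sub>2b\<^sub>2, (a\<^sub>1+a\<^sub>2)(b\<^sub>1+b\<^sub>2))\<close> (this is solving a quadratic over \<open>\<complex>\<close>). Filling
  these rows of \<open>A\<close> and \<open>B\<close> accordingly and the remaining rows with \<open>M\<close> and with ones gives
  \<open>M = A \<star> B\<close>, where in both \<open>A\<close> and \<open>B\<close> row \<open>i\<^sub>3\<close> is the sum of rows \<open>i\<^sub>1\<close> and \<open>i\<^sub>2\<close>, so both
  have rank at most \<open>m - 1\<close>. Hence every matrix has Hadamard rank at most 2, while a matrix
  of full rank \<open>m\<close> (which exists as \<open>m \<le> n\<close>) is not itself of rank \<open>\<le> m - 1\<close>.\<close>

lemma quadratic_has_root:
  fixes a b c :: complex
  assumes "a \<noteq> 0"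
  shows "\<exists>t. a * t\<^sup>2 + b * t + c = 0"
proof -
  define s where "s = csqrt (b\<^sup>2 - 4 * a * c)"
  define t where "t = (- b + s) / (2 * a)"
  have "a * t\<^sup>2 + b * t + c = (s\<^sup>2 - b\<^sup>2 + 4 * a * c) / (4 * a)"
    using assms unfolding t_def by (simp add: field_simps power2_eq_square)
  also have "\<dots> = 0" by (simp add: s_def)
  finally show ?thesis by blast
qed

lemma product_triple_surj:
  fixes x y z :: complex
  shows "\<exists>a\<^sub>1 a\<^sub>2 b\<^sub>1 b\<^sub>2. a\<^sub>1 * b\<^sub>1 = x \<and> a\<^sub>2 * b\<^sub>2 = y \<and> (a\<^sub>1 + a\<^sub>2) * (b\<^sub>1 + b\<^sub>2) = z"
proof (cases "x = 0 \<or> y = 0")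
  case True
  then consider "x = 0" "y = 0" | "x = 0" "y \<noteq> 0" | "y = 0" by blast
  then show ?thesis
  proof cases
    case 1
    then show ?thesis by (intro exI[of _ 1] exI[of _ 0] exI[of _ 0] exI[of _ z]) simp
  next
    case 2
    then show ?thesis by (intro exI[of _ 0] exI[of _ 1] exI[of _ "z - y"] exI[of _ y]) simp
  next
    case 3
    then show ?thesis by (intro exI[of _ 1] exI[of _ 0] exI[of _ x] exI[of _ "z - x"]) simp
  qed
next
  case False
  text \<open>Take \<open>a = (1, t)\<close> and \<open>b = (x, y/t)\<close>; the third equation becomes a quadratic in \<open>t\<close>.\<close>
  then obtain t where t: "x * t\<^sup>2 + (x + y - z) * t + y = 0"
    using quadratic_has_root by blast
  with False have "t \<noteq> 0" by auto
  moreover from t have "(1 + t) * (x + y / t) * t = z * t"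
    using \<open>t \<noteq> 0\<close> by (simp add: field_simps power2_eq_square)
  ultimately show ?thesis
    by (intro exI[of _ 1] exI[of _ t] exI[of _ x] exI[of _ "y / t"]) simp
qed

lemma rank_le_card_rows_minus_1:
  fixes A :: "'a::field^'n^'m"
  assumes "A $ k \<in> vec.span ((\<lambda>i. A $ i) ` (UNIV - {k}))"
  shows "rank A \<le> CARD('m) - 1"
proof -
  define T where "T = (\<lambda>i. A $ i) ` (UNIV - {k})"
  have "rows A \<subseteq> vec.span T"
  proof
    fix v assume "v \<in> rows A"
    then obtain i where "v = A $ i"
      unfolding rows_def row_def by (auto simp: vec_eq_iff)
    then show "v \<in> vec.span T"
      using assms by (cases "i = k") (auto simp: T_def intro: vec.span_base)
  qed
  then have "vec.dim (rows A) \<le> card T"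
    by (rule vec.dim_le_card) (simp add: T_def)
  also have "\<dots> \<le> card (UNIV - {k} :: 'm set)"
    unfolding T_def by (rule card_image_le) simp
  also have "\<dots> = CARD('m) - 1"
    by (simp add: card_Diff_singleton)
  finally show ?thesis by (simp add: row_rank_def_gen)
qed

lemma rank_le_card_rows_minus_1_if_row_sum:
  fixes A :: "'a::field^'n^'m"
  assumes "k \<noteq> i" "k \<noteq> j" "A $ k = A $ i + A $ j"
  shows "rank A \<le> CARD('m) - 1"
proof (rule rank_le_card_rows_minus_1)
  have "A $ i \<in> vec.span ((\<lambda>i. A $ i) ` (UNIV - {k}))"
    "A $ j \<in> vec.span ((\<lambda>i. A $ i) ` (UNIV - {k}))"
    using assms by (auto intro: vec.span_base)
  then show "A $ k \<in> vec.span ((\<lambda>i. A $ i) ` (UNIV - {k}))"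
    unfolding assms(3) by (rule vec.span_add)
qed

lemma exists_rank_eq_card_rows:
  assumes "CARD('m::finite) \<le> CARD('n::finite)"
  shows "\<exists>W :: 'a::field^'n^'m. rank W = CARD('m)"
proof -
  obtain f :: "'m \<Rightarrow> 'n" where "inj f"
    using card_le_inj[of "UNIV :: 'm set" "UNIV :: 'n set"] assms by auto
  then have inj: "inj (\<lambda>i. axis (f i) (1::'a))"
    by (auto simp: inj_def axis_eq_axis)
  define W :: "'a^'n^'m" where "W = (\<chi> i. axis (f i) 1)"
  have rows_W: "rows W = range (\<lambda>i. axis (f i) 1)"
    unfolding rows_def row_def W_def by (auto simp: vec_eq_iff)
  then have "vec.independent (rows W)"
    by (intro vec.independent_mono[OF independent_cart_basis]) (auto simp: cart_basis_def)
  then have "vec.dim (rows W) = card (rows W)"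
    by (rule vec.dim_eq_card_independent)
  also have "\<dots> = CARD('m)"
    unfolding rows_W using inj by (simp add: card_image)
  finally show ?thesis by (auto simp: row_rank_def_gen)
qed

lemma hadamard_factorization_rank_le:
  assumes "3 \<le> CARD('m::finite)"
  shows "\<exists>A B. rank A \<le> CARD('m) - 1 \<and> rank B \<le> CARD('m) - 1 \<and> (M :: complex^'n^'m) = A \<star> B"
proof -
  obtain S :: "'m set" where "card S = 3"
    using obtain_subset_with_card_n[OF assms] by blast
  then obtain i\<^sub>1 i\<^sub>2 i\<^sub>3 :: 'm where d: "i\<^sub>1 \<noteq> i\<^sub>2" "i\<^sub>2 \<noteq> i\<^sub>3" "i\<^sub>1 \<noteq> i\<^sub>3"
    unfolding card_3_iff by blast
  have "\<forall>j. \<exists>a\<^sub>1 a\<^sub>2 b\<^sub>1 b\<^sub>2. a\<^sub>1 * b\<^sub>1 = M $ i\<^sub>1 $ j \<and> a\<^sub>2 * b\<^sub>2 = M $ i\<^sub>2 $ j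
          \<and> (a\<^sub>1 + a\<^sub>2) * (b\<^sub>1 + b\<^sub>2) = M $ i\<^sub>3 $ j"
    using product_triple_surj by blast
  then have "\<exists>a\<^sub>1 a\<^sub>2 b\<^sub>1 b\<^sub>2. \<forall>j. a\<^sub>1 j * b\<^sub>1 j = M $ i\<^sub>1 $ j \<and> a\<^sub>2 j * b\<^sub>2 j = M $ i\<^sub>2 $ j
          \<and> (a\<^sub>1 j + a\<^sub>2 j) * (b\<^sub>1 j + b\<^sub>2 j) = M $ i\<^sub>3 $ j"
    by (simp only: choice_iff)
  then obtain a\<^sub>1 a\<^sub>2 b\<^sub>1 b\<^sub>2 :: "'n \<Rightarrow> complex" where
    e\<^sub>1: "\<And>j. a\<^sub>1 j * b\<^sub>1 j = M $ i\<^sub>1 $ j" and e\<^sub>2: "\<And>j. a\<^sub>2 j * b\<^sub>2 j = M $ i\<^sub>2 $ j"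
    and e\<^sub>3: "\<And>j. (a\<^sub>1 j + a\<^sub>2 j) * (b\<^sub>1 j + b\<^sub>2 j) = M $ i\<^sub>3 $ j"
    by blast
  define A :: "complex^'n^'m" where
    "A = (\<chi> i j. if i = i\<^sub>1 then a\<^sub>1 j else if i = i\<^sub>2 then a\<^sub>2 j
                 else if i = i\<^sub>3 then a\<^sub>1 j + a\<^sub>2 j else M $ i $ j)"
  define B :: "complex^'n^'m" where
    "B = (\<chi> i j. if i = i\<^sub>1 then b\<^sub>1 j else if i = i\<^sub>2 then b\<^sub>2 j
                 else if i = i\<^sub>3 then b\<^sub>1 j + b\<^sub>2 j else 1)"
  have "rank A \<le> CARD('m) - 1"
    by (rule rank_le_card_rows_minus_1_if_row_sum[of i\<^sub>3 i\<^sub>1 i\<^sub>2])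
      (use d in \<open>auto simp: A_def vec_eq_iff\<close>)
  moreover have "rank B \<le> CARD('m) - 1"
    by (rule rank_le_card_rows_minus_1_if_row_sum[of i\<^sub>3 i\<^sub>1 i\<^sub>2])
      (use d in \<open>auto simp: B_def vec_eq_iff\<close>)
  moreover have "M = A \<star> B"
    using d e\<^sub>1 e\<^sub>2 e\<^sub>3 by (auto simp: A_def B_def hadamard_def vec_eq_iff)
  ultimately show ?thesis by blast
qed

lemma Hrk_eq_2:
  fixes M :: "complex^'n^'m"
  assumes "M = A \<star> B" "rank A \<le> r" "rank B \<le> r" "\<not> rank M \<le> r"
  shows "Hrk r M = 2"
  unfolding Hrk_def
proof (rule Least_equality)
  show "\<exists>As. As \<noteq> [] \<and> length As = 2 \<and> (\<forall>A\<in>set As. rank A \<le> r)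
          \<and> M = foldr (\<star>) (butlast As) (last As)"
    using assms by (intro exI[of _ "[A, B]"]) auto
  fix s assume "\<exists>As. As \<noteq> [] \<and> length As = s \<and> (\<forall>A\<in>set As. rank A \<le> r)
                  \<and> M = foldr (\<star>) (butlast As) (last As)"
  then obtain As where As: "As \<noteq> []" "length As = s" "\<forall>A\<in>set As. rank A \<le> r"
    "M = foldr (\<star>) (butlast As) (last As)" by blast
  show "2 \<le> s"
  proof (rule ccontr)
    assume "\<not> 2 \<le> s"
    with As(1,2) obtain C where "As = [C]"
      by (cases As rule: remdups_adj.cases) auto
    with As(3,4) assms(4) show False by simp
  qed
qed

lemma Hrk_le_2:
  fixes M :: "complex^'n^'m"
  assumes "M = A \<star> B" "rank A \<le> r" "rank B \<le> r"
  shows "Hrk r M \<le> 2"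
  unfolding Hrk_def
  by (rule Least_le) (use assms in \<open>intro exI[of _ "[A, B]"], auto\<close>)

lemma Hrk_max_eq_2:
  assumes factor: "\<And>M :: complex^'n^'m. \<exists>A B. rank A \<le> r \<and> rank B \<le> r \<and> M = A \<star> B"
    and "\<not> rank (W :: complex^'n^'m) \<le> r"
  shows "Hrk_max r TYPE('n::finite) TYPE('m::finite) = 2"
  unfolding Hrk_max_def
proof (rule Max_eqI)
  have le: "Hrk r M \<le> 2" for M :: "complex^'n^'m"
    using factor[of M] Hrk_le_2[of M _ _ r] by blast
  show "finite (range (Hrk r :: complex^'n^'m \<Rightarrow> nat))"
    by (rule finite_subset[of _ "{..2}"]) (auto simp: le)
  show "y \<le> 2" if "y \<in> range (Hrk r :: complex^'n^'m \<Rightarrow> nat)" for y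
    using that le by auto
  obtain A B where "rank A \<le> r" "rank B \<le> r" "W = A \<star> B"
    using factor[of W] by blast
  then have "Hrk r W = 2"
    using Hrk_eq_2[of W A B r] assms(2) by simp
  then show "2 \<in> range (Hrk r :: complex^'n^'m \<Rightarrow> nat)"
    using rangeI[of "Hrk r" W] by simp
qed

lemma Hrk_generic_eq_2:
  assumes factor: "\<And>M :: complex^'n^'m. \<exists>A B. rank A \<le> r \<and> rank B \<le> r \<and> M = A \<star> B"
    and "\<not> rank (W :: complex^'n^'m) \<le> r"
  shows "Hrk_generic r TYPE('n::finite) TYPE('m::finite) = 2"
  unfolding Hrk_generic_def
proof (rule Least_equality)
  have "UNIV \<subseteq> {A \<star> B | A B. A \<in> Xr r \<and> B \<in> (Xr r :: (complex^'n^'m) set)}"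
    using factor unfolding Xr_def by blast
  also have "\<dots> \<subseteq> zariski_closure \<dots>"
    unfolding zariski_closure_def by auto
  finally show "1 \<le> (2::nat) \<and> hpow r 2 = (UNIV :: (complex^'n^'m) set)"
    by (auto simp: numeral_2_eq_2 hstar_def)
  have "hpow r 1 \<noteq> (UNIV :: (complex^'n^'m) set)"
    using assms(2) by (auto simp: Xr_def)
  then show "2 \<le> s" if "1 \<le> s \<and> hpow r s = (UNIV :: (complex^'n^'m) set)" for s
    using that by (cases "s = 1") auto
qed

theorem proposition4p17:
  assumes "3 \<le> CARD('m::finite)" and "CARD('m) \<le> CARD('n::finite)"
  shows "Hrk_generic (CARD('m) - 1) TYPE('n) TYPE('m) = 2
       \<and> Hrk_max (CARD('m) - 1) TYPE('n) TYPE('m) = 2"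
proof -
  obtain W :: "complex^'n^'m" where "rank W = CARD('m)"
    using exists_rank_eq_card_rows[OF assms(2)] by blast
  with assms(1) have W: "\<not> rank W \<le> CARD('m) - 1" by simp
  note factor = hadamard_factorization_rank_le[OF assms(1), where 'n = 'n]
  show ?thesis
    using Hrk_generic_eq_2[OF factor W] Hrk_max_eq_2[OF factor W] by simp
qed

end
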